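(* Let $\mathbf{C}=\mathbf{C}_1\,\dot\cup\,\mathbf{C}_2$ and $\mathbf{B}\in\dot{\mathbb{P}}(\mathbb{L}(\mathbf{C}_1))$ with $|\mathbf{B}|=|\mathbf{C}_1|$. Suppose every variable in $\mathbf{C}_2$ has a positive monotonic effect on $D$ relative to $\mathbf{C}$, and $\mathbf{W}$ suffices to adjust for confounding of $\mathbf{C}$ on $D$. If for some $\mathbf{w}$ (all conditioning events having positive probability) $$E[D\mid\mathbf{B}=\mathbf{1},\mathbf{C}_2=\mathbf{0},\mathbf{W}=\mathbf{w}]-\sum_{L\in\mathbf{B}}E[D\mid\mathbf{B}\setminus\{L\}=\mathbf{1},L=0,\mathbf{C}_2=\mathbf{0},\mathbf{W}=\mathbf{w}]>0,$$ then $\mathbf{B}$ is a minimal sufficient cause of $D$ relative to $\mathbf{C}$ for some $\omega\in\Omega$.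
   Context: $\Omega$ is a population with a probability distribution; events are binary random variables; $\overline{X}=1-X$; $\mathbb{L}(\mathbf{C})=\mathbf{C}\cup\{\overline{X}:X\in\mathbf{C}\}$; $\dot{\mathbb{P}}(\mathbb{L}(\mathbf{C}))$ is the set of subsets of $\mathbb{L}(\mathbf{C})$ not containing both $X$ and $\overline{X}$; $(L)_{\mathbf{c}}$ is the value of literal $L$ under assignment $\mathbf{c}$; $\bigwedge(\mathbf{B})=\min_{L\in\mathbf{B}}L$. Potential outcomes $D_{\mathbf{c}}(\omega)\in\{0,1\}$; consistency $D(\omega)=D_{\mathbf{C}(\omega)}(\omega)$. Conditioning on $\{\mathbf{B}\setminus\{L\}=\mathbf{1},L=0\}$ means literal $L$ equals 0 and the other literals of $\mathbf{B}$ equal 1. $\mathbf{W}$ suffices to adjust for confounding of $\mathbf{C}$ on $D$ if $D_{\mathbf{c}}$ is independent of $\mathbf{C}$ given $\mathbf{W}=\mathbf{w}$, for all $\mathbf{c},\mathbf{w}$. A variable $X\in\mathbf{C}$ has a positive monotonic effect on $D$ relative to $\mathbf{C}$ if for all $\omega$ and all values of the other variables, the potential outcome with $X=1$ is $\ge$ that with $X=0$. $\mathbf{B}$ is a sufficient cause for $D$ relative to $\mathbf{C}$ for $\omega$ if some $\mathbf{c}^*$ has $(\bigwedge(\mathbf{B}))_{\mathbf{c}^*}=1$ and $D_{\mathbf{c}}(\omega)=1$ whenever $(\bigwedge(\mathbf{B}))_{\mathbf{c}}=1$; minimal if no proper subset is such a sufficient cause. *)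

theory Defs
  imports "HOL-Probability.Probability_Mass_Function"
begin

text \<open>Literals over variable names: Pos X stands for X, Neg X for its complement 1 - X.\<close>
datatype 'v lit = Pos 'v | Neg 'v

definition lits :: "'v set \<Rightarrow> 'v lit set" where
  "lits C = Pos ` C \<union> Neg ` C"

definition dot_pow_lits :: "'v set \<Rightarrow> 'v lit set set" where
  "dot_pow_lits C = {B. B \<subseteq> lits C \<and> (\<forall>x. \<not> (Pos x \<in> B \<and> Neg x \<in> B))}"

text \<open>Value of a literal under an assignment (binary values rendered as booleans).\<close>
fun lit_val :: "'v lit \<Rightarrow> ('v \<Rightarrow> bool) \<Rightarrow> bool" where
  "lit_val (Pos x) c = c x"
| "lit_val (Neg x) c = (\<not> c x)"

definition conj_lits :: "'v lit set \<Rightarrow> ('v \<Rightarrow> bool) \<Rightarrow> bool" where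
  "conj_lits B c = (\<forall>L\<in>B. lit_val L c)"

definition assignments :: "'v set \<Rightarrow> ('v \<Rightarrow> bool) set" where
  "assignments C = {c. \<forall>x. x \<notin> C \<longrightarrow> c x = False}"

definition obs :: "'v set \<Rightarrow> ('v \<Rightarrow> 'w \<Rightarrow> bool) \<Rightarrow> 'w \<Rightarrow> ('v \<Rightarrow> bool)" where
  "obs C Xv \<omega> = (\<lambda>x. if x \<in> C then Xv x \<omega> else False)"

text \<open>B is a sufficient cause for D relative to C for individual omega
  (Dpo c omega is the potential outcome D_c(omega)).\<close>
definition sufficient_cause ::
  "'v set \<Rightarrow> (('v \<Rightarrow> bool) \<Rightarrow> 'w \<Rightarrow> bool) \<Rightarrow> 'v lit set \<Rightarrow> 'w \<Rightarrow> bool" where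
  "sufficient_cause C Dpo B \<omega> =
     (B \<in> dot_pow_lits C \<and>
      (\<exists>c\<in>assignments C. conj_lits B c) \<and>
      (\<forall>c\<in>assignments C. conj_lits B c \<longrightarrow> Dpo c \<omega>))"

definition minimal_sufficient_cause ::
  "'v set \<Rightarrow> (('v \<Rightarrow> bool) \<Rightarrow> 'w \<Rightarrow> bool) \<Rightarrow> 'v lit set \<Rightarrow> 'w \<Rightarrow> bool" where
  "minimal_sufficient_cause C Dpo B \<omega> =
     (sufficient_cause C Dpo B \<omega> \<and> (\<forall>B'. B' \<subset> B \<longrightarrow> \<not> sufficient_cause C Dpo B' \<omega>))"

definition pos_monotonic ::
  "'v set \<Rightarrow> (('v \<Rightarrow> bool) \<Rightarrow> 'w \<Rightarrow> bool) \<Rightarrow> 'v \<Rightarrow> bool" where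
  "pos_monotonic C Dpo X =
     (\<forall>\<omega>. \<forall>c\<in>assignments C. Dpo (c(X := False)) \<omega> \<longrightarrow> Dpo (c(X := True)) \<omega>)"

text \<open>W suffices to adjust for confounding of C on D: for all c and w, the potential
  outcome D_c is independent of C given W = w (stated in product form).\<close>
definition suffices_adjust ::
  "'w pmf \<Rightarrow> 'v set \<Rightarrow> ('v \<Rightarrow> 'w \<Rightarrow> bool) \<Rightarrow> ('w \<Rightarrow> 'u) \<Rightarrow> (('v \<Rightarrow> bool) \<Rightarrow> 'w \<Rightarrow> bool) \<Rightarrow> bool" where
  "suffices_adjust p C Xv W Dpo =
     (\<forall>c\<in>assignments C. \<forall>w d c'.
        measure_pmf.prob p {\<omega>. Dpo c \<omega> = d \<and> obs C Xv \<omega> = c' \<and> W \<omega> = w}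
          * measure_pmf.prob p {\<omega>. W \<omega> = w}
        = measure_pmf.prob p {\<omega>. Dpo c \<omega> = d \<and> W \<omega> = w}
          * measure_pmf.prob p {\<omega>. obs C Xv \<omega> = c' \<and> W \<omega> = w})"

definition cond_exp :: "'w pmf \<Rightarrow> ('w \<Rightarrow> bool) \<Rightarrow> 'w set \<Rightarrow> real" where
  "cond_exp p D A = measure_pmf.prob p {\<omega>\<in>A. D \<omega>} / measure_pmf.prob p A"

end

theory Submission
  imports Defs
begin

text \<open>Under the adjustment assumption, every contrast term E[D | C = c, W = w] equals
  P(D_c = 1, W = w) / P(W = w). Because B fixes every variable of C1 and C2 is set to 0,
  the conditioning events are C = b and C = b with the variable of L flipped, so the
  positive contrast says P(D_b, W = w) exceeds the sum of the P(D_(b flipped at L), W = w).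
  By the union bound some individual \<omega> has D_b(\<omega>) = 1 while every flipped outcome is 0.
  For that \<omega>, positive monotonicity in C2 lifts D_b(\<omega>) = 1 to every assignment satisfying B,
  so B is sufficient; any proper subset of B is satisfied by some flipped assignment,
  so B is minimal.\<close>

fun lit_var :: "'v lit \<Rightarrow> 'v" where
  "lit_var (Pos x) = x"
| "lit_var (Neg x) = x"

definition complete_lits :: "'v set \<Rightarrow> 'v lit set \<Rightarrow> bool" where
  "complete_lits C B \<longleftrightarrow> B \<in> dot_pow_lits C \<and> (\<forall>x\<in>C. Pos x \<in> B \<or> Neg x \<in> B)"

definition base_assignment :: "'v set \<Rightarrow> 'v lit set \<Rightarrow> 'v \<Rightarrow> bool" where
  "base_assignment C B = (\<lambda>x. x \<in> C \<and> Pos x \<in> B)"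

definition flipped_assignment :: "'v set \<Rightarrow> 'v lit set \<Rightarrow> 'v lit \<Rightarrow> 'v \<Rightarrow> bool" where
  "flipped_assignment C B L = (\<lambda>x. x \<in> C \<and> (Pos x \<in> B) \<noteq> (x = lit_var L))"

lemma lit_var_inj_on:
  assumes "B \<in> dot_pow_lits C"
  shows "inj_on lit_var B"
proof (rule inj_onI)
  fix L M assume "L \<in> B" "M \<in> B" "lit_var L = lit_var M"
  with assms show "L = M"
    by (cases L; cases M) (auto simp: dot_pow_lits_def)
qed

lemma lit_var_in_lits: "L \<in> lits C \<Longrightarrow> lit_var L \<in> C"
  by (auto simp: lits_def)

lemma complete_lits_if_card_eq:
  assumes "finite C" "B \<in> dot_pow_lits C" "card B = card C"
  shows "complete_lits C B"
proof -
  have sub: "lit_var ` B \<subseteq> C"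
    using assms(2) lit_var_in_lits by (auto simp: dot_pow_lits_def)
  have "card (lit_var ` B) = card C"
    using card_image[OF lit_var_inj_on[OF assms(2)]] assms(3) by simp
  then have "lit_var ` B = C"
    using card_subset_eq[OF assms(1) sub] by simp
  then have "\<exists>L\<in>B. lit_var L = x" if "x \<in> C" for x
    using that by blast
  then have "Pos x \<in> B \<or> Neg x \<in> B" if "x \<in> C" for x
    using that by (metis lit_var.elims)
  with assms(2) show ?thesis
    by (simp add: complete_lits_def)
qed

lemma finite_lits_member: "finite C \<Longrightarrow> B \<in> dot_pow_lits C \<Longrightarrow> finite B"
  unfolding dot_pow_lits_def lits_def by (auto intro: finite_subset)

lemma dot_pow_lits_mono: "C \<subseteq> C' \<Longrightarrow> dot_pow_lits C \<subseteq> dot_pow_lits C'"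
  unfolding dot_pow_lits_def lits_def by blast

lemma conj_lits_complete_iff:
  assumes "complete_lits C B"
  shows "conj_lits B c \<longleftrightarrow> (\<forall>x\<in>C. c x = (Pos x \<in> B))"
proof
  assume "conj_lits B c"
  with assms show "\<forall>x\<in>C. c x = (Pos x \<in> B)"
    unfolding complete_lits_def conj_lits_def by (metis lit_val.simps)
next
  assume vals: "\<forall>x\<in>C. c x = (Pos x \<in> B)"
  have "lit_val L c" if "L \<in> B" for L
    using that assms vals
    by (cases L) (auto simp: complete_lits_def dot_pow_lits_def lits_def)
  then show "conj_lits B c"
    by (simp add: conj_lits_def)
qed

lemma conj_lits_flip_iff:
  assumes "complete_lits C B" "L \<in> B"
  shows "conj_lits (B - {L}) c \<and> \<not> lit_val L c
    \<longleftrightarrow> (\<forall>x\<in>C. c x = ((Pos x \<in> B) \<noteq> (x = lit_var L)))"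
proof -
  have B: "B \<in> dot_pow_lits C" "\<forall>x\<in>C. Pos x \<in> B \<or> Neg x \<in> B"
    using assms(1) by (auto simp: complete_lits_def)
  have same_var: "M = L \<longleftrightarrow> lit_var M = lit_var L" if "M \<in> B" for M
    using inj_on_eq_iff[OF lit_var_inj_on[OF B(1)] that assms(2)] by simp
  show ?thesis
  proof
    assume "conj_lits (B - {L}) c \<and> \<not> lit_val L c"
    then have "lit_val M c \<longleftrightarrow> M \<noteq> L" if "M \<in> B" for M
      using that by (auto simp: conj_lits_def)
    with B same_var show "\<forall>x\<in>C. c x = ((Pos x \<in> B) \<noteq> (x = lit_var L))"
      by (metis lit_val.simps lit_var.simps)
  next
    assume vals: "\<forall>x\<in>C. c x = ((Pos x \<in> B) \<noteq> (x = lit_var L))"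
    have "lit_val M c \<longleftrightarrow> lit_var M \<noteq> lit_var L" if "M \<in> B" for M
      using that vals B(1) by (cases M) (auto simp: dot_pow_lits_def lits_def)
    with same_var assms(2) show "conj_lits (B - {L}) c \<and> \<not> lit_val L c"
      by (auto simp: conj_lits_def)
  qed
qed

lemma assignments_eq_iff:
  assumes "c \<in> assignments (C1 \<union> C2)" "C1 \<inter> C2 = {}"
  shows "(\<forall>x\<in>C1. c x = f x) \<and> (\<forall>x\<in>C2. \<not> c x) \<longleftrightarrow> c = (\<lambda>x. x \<in> C1 \<and> f x)"
  using assms by (auto simp: assignments_def fun_eq_iff)

lemma base_assignment_iff:
  assumes "complete_lits C1 B" "c \<in> assignments (C1 \<union> C2)" "C1 \<inter> C2 = {}"
  shows "conj_lits B c \<and> (\<forall>x\<in>C2. \<not> c x) \<longleftrightarrow> c = base_assignment C1 B"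
  using conj_lits_complete_iff[OF assms(1), of c]
    assignments_eq_iff[OF assms(2,3), of "\<lambda>x. Pos x \<in> B"]
  unfolding base_assignment_def by blast

lemma flipped_assignment_iff:
  assumes "complete_lits C1 B" "L \<in> B" "c \<in> assignments (C1 \<union> C2)" "C1 \<inter> C2 = {}"
  shows "conj_lits (B - {L}) c \<and> \<not> lit_val L c \<and> (\<forall>x\<in>C2. \<not> c x)
    \<longleftrightarrow> c = flipped_assignment C1 B L"
  using conj_lits_flip_iff[OF assms(1,2), of c]
    assignments_eq_iff[OF assms(3,4), of "\<lambda>x. (Pos x \<in> B) \<noteq> (x = lit_var L)"]
  unfolding flipped_assignment_def by blast

lemma base_assignment_in_assignments:
  "C1 \<subseteq> C \<Longrightarrow> base_assignment C1 B \<in> assignments C"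
  by (auto simp: base_assignment_def assignments_def)

lemma flipped_assignment_in_assignments:
  "C1 \<subseteq> C \<Longrightarrow> flipped_assignment C1 B L \<in> assignments C"
  by (auto simp: flipped_assignment_def assignments_def)

lemma obs_in_assignments: "obs C Xv \<omega> \<in> assignments C"
  by (simp add: obs_def assignments_def)

lemma pos_monotonic_update_True:
  assumes "pos_monotonic C Dpo x" "c \<in> assignments C" "Dpo c \<omega>"
  shows "Dpo (c(x := True)) \<omega>"
proof (cases "c x")
  case True
  with assms(3) show ?thesis by (simp add: fun_upd_idem)
next
  case False
  then have "Dpo (c(x := False)) \<omega>"
    using assms(3) by (simp add: fun_upd_idem)
  with assms(1,2) show ?thesis
    unfolding pos_monotonic_def by blast
qed

lemma pos_monotonic_raise_set:
  assumes "finite S" "S \<subseteq> C" "\<And>x. x \<in> S \<Longrightarrow> pos_monotonic C Dpo x"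
    and "c \<in> assignments C" "Dpo c \<omega>"
  shows "Dpo (\<lambda>y. c y \<or> y \<in> S) \<omega>"
  using assms(1-3)
proof (induction S rule: finite_induct)
  case empty
  with assms(5) show ?case by simp
next
  case (insert x S)
  let ?c = "\<lambda>y. c y \<or> y \<in> S"
  have "?c \<in> assignments C"
    using assms(4) insert.prems(1) by (auto simp: assignments_def)
  moreover have "Dpo ?c \<omega>"
    using insert by simp
  ultimately have "Dpo (?c(x := True)) \<omega>"
    by (rule pos_monotonic_update_True[OF insert.prems(2)[OF insertI1]])
  moreover have "?c(x := True) = (\<lambda>y. c y \<or> y \<in> insert x S)"
    by (auto simp: fun_eq_iff)
  ultimately show ?case by simp
qed

lemma cond_exp_adjusted:
  assumes adjust: "suffices_adjust p C Xv W Dpo"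
    and consistency: "\<And>\<omega>. D \<omega> = Dpo (obs C Xv \<omega>) \<omega>"
    and c: "c \<in> assignments C"
    and pos: "measure_pmf.prob p {\<omega>. obs C Xv \<omega> = c \<and> W \<omega> = w} > 0"
  shows "cond_exp p D {\<omega>. obs C Xv \<omega> = c \<and> W \<omega> = w}
    = measure_pmf.prob p {\<omega>. Dpo c \<omega> \<and> W \<omega> = w} / measure_pmf.prob p {\<omega>. W \<omega> = w}"
proof -
  let ?P = "measure_pmf.prob p"
  have "?P {\<omega>. obs C Xv \<omega> = c \<and> W \<omega> = w} \<le> ?P {\<omega>. W \<omega> = w}"
    by (rule measure_pmf.finite_measure_mono) auto
  with pos have W_pos: "?P {\<omega>. W \<omega> = w} > 0" by linarith
  have "{\<omega> \<in> {\<omega>. obs C Xv \<omega> = c \<and> W \<omega> = w}. D \<omega>}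
      = {\<omega>. Dpo c \<omega> = True \<and> obs C Xv \<omega> = c \<and> W \<omega> = w}"
    using consistency by auto
  moreover have "?P {\<omega>. Dpo c \<omega> = True \<and> obs C Xv \<omega> = c \<and> W \<omega> = w} * ?P {\<omega>. W \<omega> = w}
      = ?P {\<omega>. Dpo c \<omega> = True \<and> W \<omega> = w} * ?P {\<omega>. obs C Xv \<omega> = c \<and> W \<omega> = w}"
    using adjust c unfolding suffices_adjust_def by blast
  ultimately show ?thesis
    using W_pos pos by (simp add: cond_exp_def field_simps)
qed

lemma exists_outside_if_prob_gt_sum:
  assumes "finite I"
    and "measure_pmf.prob p A > (\<Sum>i\<in>I. measure_pmf.prob p (A' i))"
  shows "\<exists>\<omega>\<in>set_pmf p. \<omega> \<in> A \<and> (\<forall>i\<in>I. \<omega> \<notin> A' i)"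
proof (rule ccontr)
  assume "\<not> ?thesis"
  then have sub: "A \<inter> set_pmf p \<subseteq> (\<Union>i\<in>I. A' i)" by blast
  have "measure_pmf.prob p A = measure_pmf.prob p (A \<inter> set_pmf p)"
    by (simp add: measure_Int_set_pmf)
  also have "\<dots> \<le> measure_pmf.prob p (\<Union>i\<in>I. A' i)"
    by (rule measure_pmf.finite_measure_mono[OF sub]) auto
  also have "\<dots> \<le> (\<Sum>i\<in>I. measure_pmf.prob p (A' i))"
    by (rule measure_pmf.finite_measure_subadditive_finite[OF assms(1)]) auto
  finally show False using assms(2) by simp
qed

lemma obs_base_assignment_iff:
  assumes "C = C1 \<union> C2" "C1 \<inter> C2 = {}" "complete_lits C1 B"
  shows "conj_lits B (obs C Xv \<omega>) \<and> (\<forall>x\<in>C2. \<not> Xv x \<omega>)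
    \<longleftrightarrow> obs C Xv \<omega> = base_assignment C1 B"
proof -
  have "(\<forall>x\<in>C2. \<not> Xv x \<omega>) \<longleftrightarrow> (\<forall>x\<in>C2. \<not> obs C Xv \<omega> x)"
    using assms(1) by (auto simp: obs_def)
  then show ?thesis
    using base_assignment_iff[OF assms(3), of "obs C Xv \<omega>" C2] obs_in_assignments[of C Xv \<omega>]
      assms(1,2) by simp
qed

lemma obs_flipped_assignment_iff:
  assumes "C = C1 \<union> C2" "C1 \<inter> C2 = {}" "complete_lits C1 B" "L \<in> B"
  shows "conj_lits (B - {L}) (obs C Xv \<omega>) \<and> \<not> lit_val L (obs C Xv \<omega>) \<and> (\<forall>x\<in>C2. \<not> Xv x \<omega>)
    \<longleftrightarrow> obs C Xv \<omega> = flipped_assignment C1 B L"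
proof -
  have "(\<forall>x\<in>C2. \<not> Xv x \<omega>) \<longleftrightarrow> (\<forall>x\<in>C2. \<not> obs C Xv \<omega> x)"
    using assms(1) by (auto simp: obs_def)
  then show ?thesis
    using flipped_assignment_iff[OF assms(3,4), of "obs C Xv \<omega>" C2]
      obs_in_assignments[of C Xv \<omega>] assms(1,2) by simp
qed

lemma cond_exp_base_event:
  assumes "C = C1 \<union> C2" "C1 \<inter> C2 = {}" "complete_lits C1 B"
    and adjust: "suffices_adjust p C Xv W Dpo"
    and consistency: "\<And>\<omega>. D \<omega> = Dpo (obs C Xv \<omega>) \<omega>"
    and pos: "measure_pmf.prob p
      {\<omega>. conj_lits B (obs C Xv \<omega>) \<and> (\<forall>x\<in>C2. \<not> Xv x \<omega>) \<and> W \<omega> = w} > 0"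
  shows "cond_exp p D {\<omega>. conj_lits B (obs C Xv \<omega>) \<and> (\<forall>x\<in>C2. \<not> Xv x \<omega>) \<and> W \<omega> = w}
    = measure_pmf.prob p {\<omega>. Dpo (base_assignment C1 B) \<omega> \<and> W \<omega> = w}
      / measure_pmf.prob p {\<omega>. W \<omega> = w}"
proof -
  have event: "{\<omega>. conj_lits B (obs C Xv \<omega>) \<and> (\<forall>x\<in>C2. \<not> Xv x \<omega>) \<and> W \<omega> = w}
      = {\<omega>. obs C Xv \<omega> = base_assignment C1 B \<and> W \<omega> = w}"
    using obs_base_assignment_iff[OF assms(1-3), of Xv] by auto
  have "base_assignment C1 B \<in> assignments C"
    by (rule base_assignment_in_assignments) (simp add: assms(1))
  then show ?thesis
    using pos unfolding event by (rule cond_exp_adjusted[OF adjust consistency])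
qed

lemma cond_exp_flipped_event:
  assumes "C = C1 \<union> C2" "C1 \<inter> C2 = {}" "complete_lits C1 B" "L \<in> B"
    and adjust: "suffices_adjust p C Xv W Dpo"
    and consistency: "\<And>\<omega>. D \<omega> = Dpo (obs C Xv \<omega>) \<omega>"
    and pos: "measure_pmf.prob p {\<omega>. conj_lits (B - {L}) (obs C Xv \<omega>) \<and> \<not> lit_val L (obs C Xv \<omega>)
      \<and> (\<forall>x\<in>C2. \<not> Xv x \<omega>) \<and> W \<omega> = w} > 0"
  shows "cond_exp p D {\<omega>. conj_lits (B - {L}) (obs C Xv \<omega>) \<and> \<not> lit_val L (obs C Xv \<omega>)
      \<and> (\<forall>x\<in>C2. \<not> Xv x \<omega>) \<and> W \<omega> = w}
    = measure_pmf.prob p {\<omega>. Dpo (flipped_assignment C1 B L) \<omega> \<and> W \<omega> = w}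
      / measure_pmf.prob p {\<omega>. W \<omega> = w}"
proof -
  have event: "{\<omega>. conj_lits (B - {L}) (obs C Xv \<omega>) \<and> \<not> lit_val L (obs C Xv \<omega>)
      \<and> (\<forall>x\<in>C2. \<not> Xv x \<omega>) \<and> W \<omega> = w}
      = {\<omega>. obs C Xv \<omega> = flipped_assignment C1 B L \<and> W \<omega> = w}"
    using obs_flipped_assignment_iff[OF assms(1-4), of Xv] by auto
  have "flipped_assignment C1 B L \<in> assignments C"
    by (rule flipped_assignment_in_assignments) (simp add: assms(1))
  then show ?thesis
    using pos unfolding event by (rule cond_exp_adjusted[OF adjust consistency])
qed

lemma sufficient_cause_if_base_assignment:
  assumes fin: "finite C2" and C: "C = C1 \<union> C2" and disj: "C1 \<inter> C2 = {}"
    and complete: "complete_lits C1 B"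
    and mono: "\<And>x. x \<in> C2 \<Longrightarrow> pos_monotonic C Dpo x"
    and base: "Dpo (base_assignment C1 B) \<omega>"
  shows "sufficient_cause C Dpo B \<omega>"
proof -
  have C1_sub: "C1 \<subseteq> C" and C2_sub: "C2 \<subseteq> C"
    using C by auto
  have b: "base_assignment C1 B \<in> assignments C"
    by (rule base_assignment_in_assignments[OF C1_sub])
  have "B \<in> dot_pow_lits C1"
    using complete by (simp add: complete_lits_def)
  then have "B \<in> dot_pow_lits C"
    using dot_pow_lits_mono[OF C1_sub] by blast
  moreover have "conj_lits B (base_assignment C1 B)"
    using conj_lits_complete_iff[OF complete] by (simp add: base_assignment_def)
  moreover have "Dpo c \<omega>" if c: "c \<in> assignments C" and "conj_lits B c" for c
  proof -
    have vals: "\<forall>x\<in>C1. c x = (Pos x \<in> B)"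
      using conj_lits_complete_iff[OF complete] \<open>conj_lits B c\<close> by blast
    have outside: "y \<notin> C \<Longrightarrow> \<not> c y" for y
      using c by (simp add: assignments_def)
    define S where "S = {x\<in>C2. c x}"
    have "c = (\<lambda>y. base_assignment C1 B y \<or> y \<in> S)"
    proof (intro ext)
      fix y
      show "c y = (base_assignment C1 B y \<or> y \<in> S)"
        using vals outside[of y] C disj unfolding base_assignment_def S_def by blast
    qed
    moreover have "Dpo (\<lambda>y. base_assignment C1 B y \<or> y \<in> S) \<omega>"
    proof (rule pos_monotonic_raise_set[where Dpo = Dpo and c = "base_assignment C1 B", OF _ _ _ b base])
      show "finite S" using fin by (simp add: S_def)
      show "S \<subseteq> C" using C2_sub by (auto simp: S_def)
      show "pos_monotonic C Dpo x" if "x \<in> S" for x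
        using mono that by (simp add: S_def)
    qed
    ultimately show ?thesis by simp
  qed
  ultimately show ?thesis
    unfolding sufficient_cause_def using b by blast
qed


lemma minimal_sufficient_cause_if_flips_fail:
  assumes "sufficient_cause C Dpo B \<omega>" "C1 \<subseteq> C" "complete_lits C1 B"
    and flips: "\<And>L. L \<in> B \<Longrightarrow> \<not> Dpo (flipped_assignment C1 B L) \<omega>"
  shows "minimal_sufficient_cause C Dpo B \<omega>"
  unfolding minimal_sufficient_cause_def
proof (intro conjI allI impI notI assms(1))
  fix B' assume "B' \<subset> B" and suff: "sufficient_cause C Dpo B' \<omega>"
  then obtain L where L: "L \<in> B" "B' \<subseteq> B - {L}" by blast
  have "conj_lits (B - {L}) (flipped_assignment C1 B L)"
    using conj_lits_flip_iff[OF assms(3) L(1), of "flipped_assignment C1 B L"]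
    by (simp add: flipped_assignment_def)
  with L(2) have "conj_lits B' (flipped_assignment C1 B L)"
    by (auto simp: conj_lits_def)
  with suff assms(2) have "Dpo (flipped_assignment C1 B L) \<omega>"
    unfolding sufficient_cause_def using flipped_assignment_in_assignments by blast
  with flips L(1) show False by blast
qed

theorem mainTheorem10:
  fixes p :: "'w pmf"
    and C C1 C2 :: "'v set"
    and Xv :: "'v \<Rightarrow> 'w \<Rightarrow> bool"
    and W :: "'w \<Rightarrow> 'u"
    and D :: "'w \<Rightarrow> bool"
    and Dpo :: "('v \<Rightarrow> bool) \<Rightarrow> 'w \<Rightarrow> bool"
    and B :: "'v lit set"
    and w :: 'u
  assumes finC: "finite C"
    and C_split: "C = C1 \<union> C2" "C1 \<inter> C2 = {}"
    and B_in: "B \<in> dot_pow_lits C1"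
    and B_card: "card B = card C1"
    and consistency: "\<And>\<omega>. D \<omega> = Dpo (obs C Xv \<omega>) \<omega>"
    and mono: "\<And>X. X \<in> C2 \<Longrightarrow> pos_monotonic C Dpo X"
    and adjust: "suffices_adjust p C Xv W Dpo"
    and pos_main: "measure_pmf.prob p
        {\<omega>. conj_lits B (obs C Xv \<omega>) \<and> (\<forall>x\<in>C2. \<not> Xv x \<omega>) \<and> W \<omega> = w} > 0"
    and pos_L: "\<And>L. L \<in> B \<Longrightarrow> measure_pmf.prob p
        {\<omega>. conj_lits (B - {L}) (obs C Xv \<omega>) \<and> \<not> lit_val L (obs C Xv \<omega>)
             \<and> (\<forall>x\<in>C2. \<not> Xv x \<omega>) \<and> W \<omega> = w} > 0"
    and contrast: "cond_exp p D
        {\<omega>. conj_lits B (obs C Xv \<omega>) \<and> (\<forall>x\<in>C2. \<not> Xv x \<omega>) \<and> W \<omega> = w}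
      - (\<Sum>L\<in>B. cond_exp p D
        {\<omega>. conj_lits (B - {L}) (obs C Xv \<omega>) \<and> \<not> lit_val L (obs C Xv \<omega>)
             \<and> (\<forall>x\<in>C2. \<not> Xv x \<omega>) \<and> W \<omega> = w}) > 0"
  shows "\<exists>\<omega>\<in>set_pmf p. minimal_sufficient_cause C Dpo B \<omega>"
proof -
  let ?P = "measure_pmf.prob p"
  let ?b = "base_assignment C1 B" and ?fl = "flipped_assignment C1 B"
  let ?f = "\<lambda>c. ?P {\<omega>. Dpo c \<omega> \<and> W \<omega> = w}" and ?q = "?P {\<omega>. W \<omega> = w}"
  have C1_sub: "C1 \<subseteq> C" and finC1: "finite C1" and finC2: "finite C2"
    using finC C_split by auto
  have complete: "complete_lits C1 B"
    using complete_lits_if_card_eq[OF finC1 B_in B_card] .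
  have ce_base: "cond_exp p D
      {\<omega>. conj_lits B (obs C Xv \<omega>) \<and> (\<forall>x\<in>C2. \<not> Xv x \<omega>) \<and> W \<omega> = w} = ?f ?b / ?q"
    by (rule cond_exp_base_event[OF C_split complete adjust consistency pos_main])
  have ce_flip: "cond_exp p D {\<omega>. conj_lits (B - {L}) (obs C Xv \<omega>) \<and> \<not> lit_val L (obs C Xv \<omega>)
      \<and> (\<forall>x\<in>C2. \<not> Xv x \<omega>) \<and> W \<omega> = w} = ?f (?fl L) / ?q" if "L \<in> B" for L
    by (rule cond_exp_flipped_event[OF C_split complete that adjust consistency pos_L[OF that]])
  have "?f ?b / ?q - (\<Sum>L\<in>B. ?f (?fl L) / ?q) > 0"
    using contrast by (simp add: ce_base ce_flip cong: sum.cong)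
  then have "(?f ?b - (\<Sum>L\<in>B. ?f (?fl L))) / ?q > 0"
    by (simp add: diff_divide_distrib sum_divide_distrib)
  then have "?f ?b > (\<Sum>L\<in>B. ?f (?fl L))"
    by (simp add: zero_less_divide_iff)
  then have "\<exists>\<omega>\<in>set_pmf p. \<omega> \<in> {\<omega>. Dpo ?b \<omega> \<and> W \<omega> = w}
      \<and> (\<forall>L\<in>B. \<omega> \<notin> {\<omega>. Dpo (?fl L) \<omega> \<and> W \<omega> = w})"
    by (rule exists_outside_if_prob_gt_sum[OF finite_lits_member[OF finC1 B_in]])
  then obtain \<omega> where \<omega>: "\<omega> \<in> set_pmf p" and base: "Dpo ?b \<omega>"
    and flips: "\<And>L. L \<in> B \<Longrightarrow> \<not> Dpo (?fl L) \<omega>"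
    by auto
  have "sufficient_cause C Dpo B \<omega>"
    by (rule sufficient_cause_if_base_assignment[OF finC2 C_split complete mono base])
  then have "minimal_sufficient_cause C Dpo B \<omega>"
    using C1_sub complete flips by (rule minimal_sufficient_cause_if_flips_fail)
  with \<omega> show ?thesis by blast
qed

end
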